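(* Let $f:[0,\infty)\rightarrow\mathbb{R}$ be a continuous function which is $3$-convex, nondecreasing and concave. Then \[ f(|A|)+f(|B|)+f(|C|)+f(|A+B+C|)\geq f(|A+B|)+f(|B+C|)+f(|C+A|)+f(0)I_n \] in the Löwner order, whenever $A,B,C$ are real symmetric $n\times n$ matrices that commute with each other.
   Context: For a real symmetric matrix $A$, $|A|=(A^2)^{1/2}$ is its modulus (a positive semidefinite matrix), and for a positive semidefinite matrix $M=U\operatorname{diag}(\lambda_1,\dots,\lambda_n)U^{T}$ with $U$ orthogonal, $f(M)=U\operatorname{diag}(f(\lambda_1),\dots,f(\lambda_n))U^{T}$. $I_n$ is the $n\times n$ identity matrix. The Löwner order: $X\leq Y$ iff $\langle X\mathbf{x},\mathbf{x}\rangle\leq\langle Y\mathbf{x},\mathbf{x}\rangle$ for all $\mathbf{x}\in\mathbb{R}^n$. A real function $f$ on an interval is $3$-convex if for all $x_0<x_1<x_2<x_3$ in the interval, $\sum_{j=0}^{3}\frac{f(x_j)}{\prod_{k\neq j}(x_j-x_k)}\geq0$. *)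

theory Defs
  imports "HOL-Analysis.Analysis"
begin

definition diagm :: "('n::finite \<Rightarrow> real) \<Rightarrow> real^'n^'n" where
  "diagm l = (\<chi> i j. if i = j then l i else 0)"

definition matfun :: "(real \<Rightarrow> real) \<Rightarrow> real^'n^'n \<Rightarrow> real^'n^'n" where
  "matfun f M = (SOME X. \<exists>U l. orthogonal_matrix U \<and>
      M = U ** diagm l ** transpose U \<and> X = U ** diagm (\<lambda>i. f (l i)) ** transpose U)"

definition matabs :: "real^'n^'n \<Rightarrow> real^'n^'n" where
  "matabs A = matfun sqrt (A ** A)"

definition loewner_le :: "real^'n^'n \<Rightarrow> real^'n^'n \<Rightarrow> bool" where
  "loewner_le X Y \<longleftrightarrow> (\<forall>x::real^'n. (X *v x) \<bullet> x \<le> (Y *v x) \<bullet> x)"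

definition symmetric_matrix :: "real^'n^'n \<Rightarrow> bool" where
  "symmetric_matrix A \<longleftrightarrow> transpose A = A"

definition three_convex_on :: "real set \<Rightarrow> (real \<Rightarrow> real) \<Rightarrow> bool" where
  "three_convex_on S f \<longleftrightarrow> (\<forall>x0 x1 x2 x3. x0 \<in> S \<and> x1 \<in> S \<and> x2 \<in> S \<and> x3 \<in> S \<and>
      x0 < x1 \<and> x1 < x2 \<and> x2 < x3 \<longrightarrow>
      0 \<le> f x0 / ((x0 - x1) * (x0 - x2) * (x0 - x3))
         + f x1 / ((x1 - x0) * (x1 - x2) * (x1 - x3))
         + f x2 / ((x2 - x0) * (x2 - x1) * (x2 - x3))
         + f x3 / ((x3 - x0) * (x3 - x1) * (x3 - x2)))"

end

theory Submission
  imports Defs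
begin

text \<open>Commuting symmetric matrices are simultaneously orthogonally diagonalizable,
  \<open>A = U diag(a) U\<^sup>T\<close> and likewise for \<open>B\<close>, \<open>C\<close>. Every matrix in the inequality is then
  \<open>U diag(\<dots>) U\<^sup>T\<close> of the corresponding scalar expression, so the claim reduces to the
  Hlawka-type inequality \<open>f|a+b| + f|b+c| + f|c+a| + f 0 \<le> f|a| + f|b| + f|c| + f|a+b+c|\<close>
  for reals.

  For \<open>a, b, c \<ge> 0\<close> this says that the second difference \<open>f(x+a+b) - f(x+a) - f(x+b) + f x\<close>
  is nondecreasing in \<open>x\<close>. It is a positive combination of second divided differences, which
  increase with their nodes because \<open>f\<close> is 3-convex. Up to permutation and a global sign
  change the remaining case is \<open>a, b \<ge> 0 \<ge> c\<close>; it follows from monotonicity and concavity, except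
  when \<open>|c| \<ge> a + b\<close>, where the second-difference argument applies again.\<close>

section \<open>Divided differences\<close>

definition divdiff2 :: "(real \<Rightarrow> real) \<Rightarrow> real \<Rightarrow> real \<Rightarrow> real \<Rightarrow> real" where
  "divdiff2 f x0 x1 x2 =
      f x0 / ((x0 - x1) * (x0 - x2)) + f x1 / ((x1 - x0) * (x1 - x2)) + f x2 / ((x2 - x0) * (x2 - x1))"

definition divdiff3 :: "(real \<Rightarrow> real) \<Rightarrow> real \<Rightarrow> real \<Rightarrow> real \<Rightarrow> real \<Rightarrow> real" where
  "divdiff3 f x0 x1 x2 x3 =
      f x0 / ((x0 - x1) * (x0 - x2) * (x0 - x3))
    + f x1 / ((x1 - x0) * (x1 - x2) * (x1 - x3))
    + f x2 / ((x2 - x0) * (x2 - x1) * (x2 - x3))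
    + f x3 / ((x3 - x0) * (x3 - x1) * (x3 - x2))"

lemma three_convex_onD:
  assumes "three_convex_on S f" "x0 \<in> S" "x1 \<in> S" "x2 \<in> S" "x3 \<in> S" "x0 < x1" "x1 < x2" "x2 < x3"
  shows "0 \<le> divdiff3 f x0 x1 x2 x3"
  using assms unfolding three_convex_on_def divdiff3_def by blast

lemma divdiff2_swap_23: "divdiff2 f x0 x1 x2 = divdiff2 f x0 x2 x1"
  unfolding divdiff2_def by (simp add: ac_simps)

lemma divdiff2_rotate: "divdiff2 f x0 x1 x2 = divdiff2 f x1 x2 x0"
  unfolding divdiff2_def by (simp add: ac_simps)

lemma divdiff3_swap: "divdiff3 f x0 x1 x2 x3 = divdiff3 f x0 x3 x1 x2"
  unfolding divdiff3_def by (simp add: ac_simps)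

lemma divdiff3_rotate2: "divdiff3 f x0 x1 x2 x3 = divdiff3 f x2 x3 x0 x1"
  unfolding divdiff3_def by (simp add: ac_simps)

lemma divdiff2_replace_node:
  assumes "distinct [x0, x1, x2, x3]"
  shows "divdiff2 f x0 x1 x3 - divdiff2 f x0 x1 x2 = (x3 - x2) * divdiff3 f x0 x1 x2 x3"
proof -
  have drop2: "y / (a * c) - y / (a * b) = (b - c) * (y / (a * b * c))"
    if "a \<noteq> 0" "b \<noteq> 0" "c \<noteq> 0" for a b c y :: real
    using that by (simp add: field_simps)
  have drop1: "y / (a * b) = c * (y / (a * b * c))" if "c \<noteq> 0" for a b c y :: real
    using that by simp
  have "f x0 / ((x0 - x1) * (x0 - x3)) - f x0 / ((x0 - x1) * (x0 - x2))
      = (x3 - x2) * (f x0 / ((x0 - x1) * (x0 - x2) * (x0 - x3)))"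
    using drop2[of "x0 - x1" "x0 - x2" "x0 - x3" "f x0"] assms by simp
  moreover have "f x1 / ((x1 - x0) * (x1 - x3)) - f x1 / ((x1 - x0) * (x1 - x2))
      = (x3 - x2) * (f x1 / ((x1 - x0) * (x1 - x2) * (x1 - x3)))"
    using drop2[of "x1 - x0" "x1 - x2" "x1 - x3" "f x1"] assms by simp
  moreover have "- (f x2 / ((x2 - x0) * (x2 - x1)))
      = (x3 - x2) * (f x2 / ((x2 - x0) * (x2 - x1) * (x2 - x3)))"
  proof -
    have "f x2 / ((x2 - x0) * (x2 - x1)) = (x2 - x3) * (f x2 / ((x2 - x0) * (x2 - x1) * (x2 - x3)))"
      using drop1[of "x2 - x0" "x2 - x1" "x2 - x3" "f x2"] assms by simp
    then show ?thesis by (metis minus_diff_eq mult_minus_left)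
  qed
  moreover have "f x3 / ((x3 - x0) * (x3 - x1))
      = (x3 - x2) * (f x3 / ((x3 - x0) * (x3 - x1) * (x3 - x2)))"
    using drop1[of "x3 - x0" "x3 - x1" "x3 - x2" "f x3"] assms by simp
  ultimately show ?thesis
    unfolding divdiff2_def divdiff3_def distrib_left by linarith
qed

lemma divdiff2_increase_node:
  assumes "three_convex_on S f" "x0 \<in> S" "x1 \<in> S" "x2 \<in> S" "x3 \<in> S" "x0 < x1" "x1 < x2" "x2 < x3"
  shows "divdiff2 f x0 x1 x2 \<le> divdiff2 f x0 x1 x3"
    and "divdiff2 f x0 x1 x3 \<le> divdiff2 f x0 x2 x3"
    and "divdiff2 f x0 x2 x3 \<le> divdiff2 f x1 x2 x3"
proof -
  have nonneg: "0 \<le> (t - s) * divdiff3 f x0 x1 x2 x3" if "s < t" for s t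
    using that three_convex_onD[OF assms] by simp
  have dist: "distinct [x0, x1, x2, x3]" "distinct [x0, x3, x1, x2]" "distinct [x2, x3, x0, x1]"
    using assms by auto
  have "divdiff2 f x0 x1 x3 - divdiff2 f x0 x1 x2 = (x3 - x2) * divdiff3 f x0 x1 x2 x3"
    using divdiff2_replace_node[OF dist(1)] .
  with nonneg[of x2 x3] \<open>x2 < x3\<close> show "divdiff2 f x0 x1 x2 \<le> divdiff2 f x0 x1 x3" by linarith
  have "divdiff2 f x0 x2 x3 - divdiff2 f x0 x1 x3 = (x2 - x1) * divdiff3 f x0 x1 x2 x3"
    using divdiff2_replace_node[OF dist(2)]
    by (metis divdiff2_swap_23 divdiff3_swap)
  with nonneg[of x1 x2] \<open>x1 < x2\<close> show "divdiff2 f x0 x1 x3 \<le> divdiff2 f x0 x2 x3" by linarith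
  have "divdiff2 f x1 x2 x3 - divdiff2 f x0 x2 x3 = (x1 - x0) * divdiff3 f x0 x1 x2 x3"
    using divdiff2_replace_node[OF dist(3)]
    by (metis divdiff2_rotate divdiff3_rotate2)
  with nonneg[of x0 x1] \<open>x0 < x1\<close> show "divdiff2 f x0 x2 x3 \<le> divdiff2 f x1 x2 x3" by linarith
qed

lemma divdiff2_mono:
  assumes f: "three_convex_on S f"
    and S: "p \<in> S" "q \<in> S" "r \<in> S" "p' \<in> S" "q' \<in> S" "r' \<in> S"
    and "p < q" "q < r" "p' < q'" "q' < r'" "p \<le> p'" "q \<le> q'" "r \<le> r'"
  shows "divdiff2 f p q r \<le> divdiff2 f p' q' r'"
proof -
  have "divdiff2 f p q r \<le> divdiff2 f p q r'"
    using divdiff2_increase_node(1)[OF f, of p q r r'] assms by (cases "r = r'") auto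
  also have "\<dots> \<le> divdiff2 f p q' r'"
    using divdiff2_increase_node(2)[OF f, of p q q' r'] assms by (cases "q = q'") auto
  also have "\<dots> \<le> divdiff2 f p' q' r'"
    using divdiff2_increase_node(3)[OF f, of p p' q' r'] assms by (cases "p = p'") auto
  finally show ?thesis .
qed

lemma second_difference_eq_divdiff2:
  assumes "0 < b" "b < c"
  shows "f (x + b + c) - f (x + b) - f (x + c) + f x
    = b * c * (divdiff2 f x (x + b) (x + c) + divdiff2 f (x + b) (x + c) (x + b + c))"
proof -
  \<comment> \<open>naming \<open>c - b\<close> stops \<open>field_simps\<close> from multiplying out the denominators\<close>
  define k where "k = c - b"
  have k: "k \<noteq> 0" "b \<noteq> 0" "c \<noteq> 0" using assms by (auto simp: k_def)
  have diffs: "x - (x + b) = - b" "x - (x + c) = - c" "x + b - x = b" "x + c - x = c"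
    "x + b - (x + c) = - k" "x + c - (x + b) = k" "x + b - (x + b + c) = - c"
    "x + c - (x + b + c) = - b" "x + b + c - (x + b) = c" "x + b + c - (x + c) = b"
    by (simp_all add: k_def)
  have "b * c * (divdiff2 f x (x + b) (x + c) + divdiff2 f (x + b) (x + c) (x + b + c))
      = f x + (b - c) / k * f (x + b) + (b - c) / k * f (x + c) + f (x + b + c)"
    unfolding divdiff2_def diffs using k by (simp add: field_simps)
  also have "\<dots> = f (x + b + c) - f (x + b) - f (x + c) + f x"
  proof -
    have "b - c = - k" by (simp add: k_def)
    then have "(b - c) / k = - 1" using k by simp
    then show ?thesis by simp
  qed
  finally show ?thesis by simp
qed

lemma second_difference_eq_divdiff2_equal_steps:
  assumes "0 < b"
  shows "f (x + b + b) - f (x + b) - f (x + b) + f x = 2 * b\<^sup>2 * divdiff2 f x (x + b) (x + b + b)"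
proof -
  have diffs: "x - (x + b) = - b" "x - (x + b + b) = - (2 * b)" "x + b - x = b"
    "x + b - (x + b + b) = - b" "x + b + b - x = 2 * b" "x + b + b - (x + b) = b"
    by simp_all
  show ?thesis
    unfolding divdiff2_def diffs using assms by (simp add: field_simps power2_eq_square)
qed

lemma three_convex_second_difference_mono:
  assumes f: "three_convex_on {0..} f" and "0 \<le> x" "x \<le> x'" "0 \<le> b" "0 \<le> c"
  shows "f (x + b + c) - f (x + b) - f (x + c) + f x \<le> f (x' + b + c) - f (x' + b) - f (x' + c) + f x'"
proof -
  have ordered:
    "f (x + b + c) - f (x + b) - f (x + c) + f x \<le> f (x' + b + c) - f (x' + b) - f (x' + c) + f x'"
    if bc: "0 \<le> b" "b \<le> c" for b c
  proof -
    consider "b = 0" | "0 < b" "b = c" | "0 < b" "b < c" using bc by linarith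
    then show ?thesis
    proof cases
      case 1
      then show ?thesis by simp
    next
      case 2
      have "divdiff2 f x (x + b) (x + b + b) \<le> divdiff2 f x' (x' + b) (x' + b + b)"
        using 2 assms by (intro divdiff2_mono[OF f]) auto
      then show ?thesis
        using 2 second_difference_eq_divdiff2_equal_steps[of b f] by simp
    next
      case 3
      have "divdiff2 f x (x + b) (x + c) \<le> divdiff2 f x' (x' + b) (x' + c)"
        "divdiff2 f (x + b) (x + c) (x + b + c) \<le> divdiff2 f (x' + b) (x' + c) (x' + b + c)"
        using 3 assms by (intro divdiff2_mono[OF f]; auto)+
      then show ?thesis
        using 3 second_difference_eq_divdiff2[of b c f] by (simp add: mult_left_mono)
    qed
  qed
  show ?thesis
  proof (cases "b \<le> c")
    case True
    then show ?thesis using ordered assms by blast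
  next
    case False
    then show ?thesis using ordered[of c b] assms by (simp add: ac_simps)
  qed
qed

lemma concave_on_increments_antimono:
  fixes f :: "real \<Rightarrow> real"
  assumes f: "concave_on S f" and S: "x \<in> S" "y + h \<in> S" and "x \<le> y" "0 \<le> h"
  shows "f x + f (y + h) \<le> f (x + h) + f y"
proof (cases "y - x + h = 0")
  case True
  with assms have "h = 0" by linarith
  then show ?thesis by simp
next
  case False
  define t where "t = h / (y - x + h)"
  have t: "0 \<le> t" "t \<le> 1" using False assms by (auto simp: t_def field_simps)
  have "t * (y - x + h) = h" using False by (simp add: t_def)
  then have xh: "(1 - t) *\<^sub>R x + t *\<^sub>R (y + h) = x + h"
    and y: "(1 - (1 - t)) *\<^sub>R x + (1 - t) *\<^sub>R (y + h) = y"
    by (simp_all add: algebra_simps; linarith)+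
  have "(1 - t) * f x + t * f (y + h) \<le> f (x + h)"
    using concave_onD[OF f _ _ S, of t] t by (simp only: xh)
  moreover have "(1 - (1 - t)) * f x + (1 - t) * f (y + h) \<le> f y"
    using concave_onD[OF f _ _ S, of "1 - t"] t by (simp only: y diff_ge_0_iff_ge diff_le_self)
  ultimately show ?thesis by (simp add: algebra_simps)
qed

section \<open>The scalar Hlawka-type inequality\<close>

lemma hlawka_ineq_nonneg:
  assumes "three_convex_on {0..} f" "0 \<le> a" "0 \<le> b" "0 \<le> c"
  shows "f (a + b) + f (b + c) + f (c + a) + f 0 \<le> f a + f b + f c + f (a + b + c)"
  using three_convex_second_difference_mono[OF assms(1) order_refl assms(4,2,3)]
  by (simp add: ac_simps)

lemma hlawka_ineq_one_negative:
  assumes f: "three_convex_on {0..} f" "mono_on {0..} f" "concave_on {0..} f"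
    and "0 \<le> a" "a \<le> b" "0 \<le> d"
  shows "f (a + b) + f \<bar>a - d\<bar> + f \<bar>b - d\<bar> + f 0 \<le> f a + f b + f d + f \<bar>a + b - d\<bar>"
proof -
  have mono: "f u \<le> f v" if "0 \<le> u" "u \<le> v" for u v
    using mono_onD[OF f(2)] that by simp
  have conc: "f 0 + f (y + h) \<le> f h + f y" if "0 \<le> y" "0 \<le> h" for y h
    using concave_on_increments_antimono[OF f(3), of 0 y h] that by simp
  consider "d \<le> a" | "a \<le> d" "d \<le> b" | "b \<le> d" "d \<le> a + b" | "a + b \<le> d"
    using assms by linarith
  then show ?thesis
  proof cases
    case 1
    with assms mono[of "a - d" a] mono[of "b - d" b] conc[of "a + b - d" d] show ?thesis by simp
  next
    case 2
    with assms mono[of "d - a" d] mono[of "b - d" "a + b - d"] conc[of b a] show ?thesis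
      by (simp add: add.commute)
  next
    case 3
    with assms mono[of "d - a" b] mono[of "d - b" a] conc[of d "a + b - d"] show ?thesis by simp
  next
    case 4
    with assms three_convex_second_difference_mono[OF f(1), of 0 "d - a - b" a b] show ?thesis
      by (simp add: algebra_simps)
  qed
qed

lemma hlawka_ineq_two_nonneg:
  assumes f: "three_convex_on {0..} f" "mono_on {0..} f" "concave_on {0..} f"
    and "0 \<le> a" "0 \<le> b"
  shows "f \<bar>a + b\<bar> + f \<bar>b + c\<bar> + f \<bar>c + a\<bar> + f 0 \<le> f \<bar>a\<bar> + f \<bar>b\<bar> + f \<bar>c\<bar> + f \<bar>a + b + c\<bar>"
proof (cases "0 \<le> c")
  case True
  with assms hlawka_ineq_nonneg[OF f(1), of a b c] show ?thesis by simp
next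
  case c_neg: False
  show ?thesis
  proof (cases "a \<le> b")
    case True
    with c_neg assms hlawka_ineq_one_negative[OF f, of a b "- c"] show ?thesis
      by (simp add: ac_simps)
  next
    case False
    with c_neg assms hlawka_ineq_one_negative[OF f, of b a "- c"] show ?thesis
      by (simp add: ac_simps)
  qed
qed

lemma hlawka_ineq:
  assumes f: "three_convex_on {0..} f" "mono_on {0..} f" "concave_on {0..} f"
  shows "f \<bar>a + b\<bar> + f \<bar>b + c\<bar> + f \<bar>c + a\<bar> + f 0 \<le> f \<bar>a\<bar> + f \<bar>b\<bar> + f \<bar>c\<bar> + f \<bar>a + b + c\<bar>"
proof -
  note two_nonneg = hlawka_ineq_two_nonneg[OF f]
  have abs_neg: "\<bar>- x - y\<bar> = \<bar>x + y\<bar>" "\<bar>- x - y - z\<bar> = \<bar>x + y + z\<bar>" for x y z :: real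
    by arith+
  consider "0 \<le> a" "0 \<le> b" | "0 \<le> b" "0 \<le> c" | "0 \<le> c" "0 \<le> a"
    | "a \<le> 0" "b \<le> 0" | "b \<le> 0" "c \<le> 0" | "c \<le> 0" "a \<le> 0"
    by linarith
  then show ?thesis
  proof cases
    case 1
    then show ?thesis using two_nonneg[of a b c] by simp
  next
    case 2
    then show ?thesis using two_nonneg[of b c a] by (simp add: ac_simps)
  next
    case 3
    then show ?thesis using two_nonneg[of c a b] by (simp add: ac_simps)
  next
    case 4
    then show ?thesis using two_nonneg[of "- a" "- b" "- c"] by (simp add: abs_neg ac_simps)
  next
    case 5
    then show ?thesis using two_nonneg[of "- b" "- c" "- a"] by (simp add: abs_neg ac_simps)
  next
    case 6
    then show ?thesis using two_nonneg[of "- c" "- a" "- b"] by (simp add: abs_neg ac_simps)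
  qed
qed

section \<open>Simultaneous diagonalization of commuting symmetric matrices\<close>

lemma symmetric_matrix_inner:
  assumes "symmetric_matrix M"
  shows "(M *v x) \<bullet> y = x \<bullet> (M *v y)"
proof -
  have "(M *v x) \<bullet> y = (y v* M) \<bullet> x" by (metis dot_lmul_matrix inner_commute)
  also have "\<dots> = x \<bullet> (M *v y)"
    using assms by (metis symmetric_matrix_def vector_transpose_matrix inner_commute)
  finally show ?thesis .
qed

lemma linear_le_quadratic_imp_zero:
  fixes N C :: real
  assumes "\<And>s. s * N \<le> s\<^sup>2 * C"
  shows "N = 0"
proof -
  define s where "s = N / (\<bar>C\<bar> + 1)"
  have "s * N = s\<^sup>2 * (\<bar>C\<bar> + 1)"
    by (simp add: s_def power2_eq_square add_pos_nonneg)
  moreover have "s\<^sup>2 * C \<le> s\<^sup>2 * \<bar>C\<bar>" by (simp add: mult_left_mono)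
  ultimately have "s\<^sup>2 * (\<bar>C\<bar> + 1) \<le> s\<^sup>2 * \<bar>C\<bar>" using assms[of s] by linarith
  then have "s = 0" by (simp add: distrib_left)
  then show ?thesis by (simp add: s_def) arith
qed

text \<open>Maximality at \<open>v + s w\<close> for all \<open>s\<close> forces the residual \<open>w = M v - l v\<close> to vanish:
  the term of the inequality that is linear in \<open>s\<close> is \<open>2 |w|\<^sup>2\<close>.\<close>
lemma rayleigh_maximiser_is_eigenvector:
  fixes M :: "real^'n^'n"
  assumes sym: "symmetric_matrix M" and S: "subspace S" and inv: "\<And>x. x \<in> S \<Longrightarrow> M *v x \<in> S"
    and v: "v \<in> S" "v \<bullet> v = 1"
    and max: "\<And>z. z \<in> S \<Longrightarrow> (M *v z) \<bullet> z \<le> ((M *v v) \<bullet> v) * (z \<bullet> z)"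
  shows "M *v v = ((M *v v) \<bullet> v) *\<^sub>R v"
proof -
  define l where "l = (M *v v) \<bullet> v"
  define w where "w = M *v v - l *\<^sub>R v"
  have wS: "w \<in> S" unfolding w_def using S inv v by (simp add: subspace_diff subspace_mul)
  have wv: "w \<bullet> v = 0" unfolding w_def l_def using v by (simp add: inner_diff_left)
  have Mvw: "(M *v v) \<bullet> w = w \<bullet> w" "(M *v w) \<bullet> v = w \<bullet> w"
  proof -
    have "M *v v = w + l *\<^sub>R v" unfolding w_def by simp
    then show "(M *v v) \<bullet> w = w \<bullet> w" using wv by (simp add: inner_add_left inner_commute[of v w])
    then show "(M *v w) \<bullet> v = w \<bullet> w" by (metis symmetric_matrix_inner[OF sym] inner_commute)
  qed
  have "s * (2 * (w \<bullet> w)) \<le> s\<^sup>2 * (l * (w \<bullet> w) - (M *v w) \<bullet> w)" for s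
  proof -
    have "v + s *\<^sub>R w \<in> S" using S v wS by (simp add: subspace_add subspace_mul)
    from max[OF this] show ?thesis
      using v(2) wv Mvw unfolding l_def
      by (simp add: matrix_vector_right_distrib matrix_vector_mult_scaleR inner_add_left
          inner_add_right inner_commute power2_eq_square algebra_simps)
  qed
  then have "2 * (w \<bullet> w) = 0" by (rule linear_le_quadratic_imp_zero)
  then show ?thesis by (simp add: w_def l_def)
qed

lemma symmetric_matrix_eigenvector_in_subspace:
  fixes M :: "real^'n^'n"
  assumes sym: "symmetric_matrix M" and S: "subspace S" "S \<noteq> {0}"
    and inv: "\<And>x. x \<in> S \<Longrightarrow> M *v x \<in> S"
  shows "\<exists>v\<in>S. v \<noteq> 0 \<and> (\<exists>l. M *v v = l *\<^sub>R v)"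
proof -
  let ?q = "\<lambda>x. (M *v x) \<bullet> x"
  let ?K = "S \<inter> sphere 0 1"
  obtain x0 where x0: "x0 \<in> S" "x0 \<noteq> 0" using S subspace_0 by blast
  have K: "compact ?K" using closed_subspace[OF S(1)] by (intro closed_Int_compact) auto
  have "x0 /\<^sub>R norm x0 \<in> ?K" using x0 S by (auto simp: subspace_mul)
  then have K_ne: "?K \<noteq> {}" by blast
  have "continuous_on ?K ?q"
    by (intro continuous_intros linear_continuous_on linear_conv_bounded_linear[THEN iffD1]) simp
  then obtain v where v: "v \<in> ?K" and vmax: "\<And>y. y \<in> ?K \<Longrightarrow> ?q y \<le> ?q v"
    using continuous_attains_sup[OF K K_ne] by blast
  have "?q z \<le> ?q v * (z \<bullet> z)" if "z \<in> S" for z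
  proof (cases "z = 0")
    case False
    then have "z /\<^sub>R norm z \<in> ?K" using that S by (auto simp: subspace_mul)
    then have "?q (z /\<^sub>R norm z) \<le> ?q v" by (rule vmax)
    moreover have "?q (z /\<^sub>R norm z) = ?q z / (norm z)\<^sup>2"
      by (simp add: matrix_vector_mult_scaleR power2_eq_square divide_inverse)
    ultimately have "?q z / (norm z)\<^sup>2 \<le> ?q v" by simp
    then show ?thesis using False by (simp add: divide_le_eq power2_norm_eq_inner)
  qed simp
  then have "M *v v = ?q v *\<^sub>R v"
    using v by (intro rayleigh_maximiser_is_eigenvector[OF sym S(1) inv]) (auto simp: norm_eq_1)
  moreover have "v \<noteq> 0" using v by auto
  ultimately show ?thesis using v by blast
qed

definition common_eigenvector :: "(real^'n^'n) set \<Rightarrow> real^'n \<Rightarrow> bool" where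
  "common_eigenvector F v \<longleftrightarrow> (\<forall>M\<in>F. \<exists>l. M *v v = l *\<^sub>R v)"

lemma subspace_eigenspace:
  fixes M :: "real^'n^'n"
  assumes "subspace S"
  shows "subspace {x\<in>S. M *v x = l *\<^sub>R x}"
  using assms unfolding subspace_def
  by (auto simp: matrix_vector_right_distrib matrix_vector_mult_scaleR scaleR_right_distrib)

lemma eigenspace_invariant_commuting:
  fixes M N :: "real^'n^'n"
  assumes "N ** M = M ** N" "\<And>x. x \<in> S \<Longrightarrow> N *v x \<in> S" "x \<in> {x\<in>S. M *v x = l *\<^sub>R x}"
  shows "N *v x \<in> {x\<in>S. M *v x = l *\<^sub>R x}"
proof -
  have "M *v (N *v x) = N *v (M *v x)" using assms(1) by (simp add: matrix_vector_mul_assoc)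
  then show ?thesis using assms by (simp add: matrix_vector_mult_scaleR)
qed

lemma commuting_symmetric_common_eigenvector:
  fixes F :: "(real^'n^'n) set"
  assumes "finite F" "\<And>M. M \<in> F \<Longrightarrow> symmetric_matrix M"
    and "\<And>M N. M \<in> F \<Longrightarrow> N \<in> F \<Longrightarrow> M ** N = N ** M"
    and "subspace S" "S \<noteq> {0}" "\<And>M x. M \<in> F \<Longrightarrow> x \<in> S \<Longrightarrow> M *v x \<in> S"
  shows "\<exists>v\<in>S. v \<noteq> 0 \<and> common_eigenvector F v"
  using assms
proof (induction F arbitrary: S rule: finite_induct)
  case empty
  then show ?case using subspace_0 by (auto simp: common_eigenvector_def)
next
  case (insert M F)
  obtain u l where u: "u \<in> S" "u \<noteq> 0" "M *v u = l *\<^sub>R u"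
    using symmetric_matrix_eigenvector_in_subspace[of M S] insert.prems by blast
  define E where "E = {x\<in>S. M *v x = l *\<^sub>R x}"
  have "subspace E" unfolding E_def by (rule subspace_eigenspace) (rule insert.prems)
  moreover have "E \<noteq> {0}" using u unfolding E_def by blast
  moreover have "N *v x \<in> E" if "N \<in> F" "x \<in> E" for N x
    unfolding E_def using that insert.prems
    by (intro eigenspace_invariant_commuting) (auto simp: E_def)
  ultimately obtain v where "v \<in> E" "v \<noteq> 0" "common_eigenvector F v"
    using insert.IH[of E] insert.prems by blast
  then show ?case unfolding E_def common_eigenvector_def by auto
qed

lemma commuting_symmetric_orthonormal_eigenvectors:
  fixes F :: "(real^'n^'n) set"
  assumes F: "finite F" "\<And>M. M \<in> F \<Longrightarrow> symmetric_matrix M"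
    "\<And>M N. M \<in> F \<Longrightarrow> N \<in> F \<Longrightarrow> M ** N = N ** M"
    and "k \<le> CARD('n)"
  shows "\<exists>V. finite V \<and> card V = k \<and> pairwise orthogonal V
    \<and> (\<forall>v\<in>V. norm v = 1 \<and> common_eigenvector F v)"
  using \<open>k \<le> CARD('n)\<close>
proof (induction k)
  case 0
  show ?case by (intro exI[of _ "{}"]) auto
next
  case (Suc k)
  then obtain V where V: "finite V" "card V = k" "pairwise orthogonal V"
    "\<forall>v\<in>V. norm v = 1 \<and> common_eigenvector F v"
    by auto
  define S where "S = {y. \<forall>x\<in>V. orthogonal x y}"
  have S: "subspace S" unfolding S_def by (rule subspace_orthogonal_to_vectors)
  have "dim V \<le> card V" using V(1) by (intro dim_le_card span_superset) auto
  then have "dim V < DIM(real^'n)" using V(2) Suc.prems by simp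
  then obtain x0 where x0: "x0 \<noteq> 0" "\<And>y. y \<in> span V \<Longrightarrow> orthogonal x0 y"
    using orthogonal_to_subspace_exists by blast
  have "x0 \<in> S" unfolding S_def using x0(2) span_superset orthogonal_commute by blast
  with x0(1) have "S \<noteq> {0}" by blast
  moreover have "M *v y \<in> S" if "M \<in> F" "y \<in> S" for M y
    unfolding S_def
  proof (intro CollectI ballI)
    fix x assume "x \<in> V"
    then obtain l where "M *v x = l *\<^sub>R x"
      using V(4) \<open>M \<in> F\<close> unfolding common_eigenvector_def by blast
    moreover have "orthogonal x y" using that \<open>x \<in> V\<close> unfolding S_def by blast
    ultimately show "orthogonal x (M *v y)"
      using symmetric_matrix_inner[OF F(2)[OF \<open>M \<in> F\<close>], of x y] by (simp add: orthogonal_def)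
  qed
  ultimately obtain w where w: "w \<in> S" "w \<noteq> 0" "common_eigenvector F w"
    using commuting_symmetric_common_eigenvector[OF F(1-3) S] by blast
  define u where "u = w /\<^sub>R norm w"
  have uS: "u \<in> S" unfolding u_def using S w(1) by (simp add: subspace_mul)
  have nu: "norm u = 1" unfolding u_def using w(2) by simp
  have "common_eigenvector F u"
    using w(3) unfolding common_eigenvector_def u_def by (auto simp: matrix_vector_mult_scaleR)
  moreover have "u \<notin> V"
    using uS nu unfolding S_def by (auto simp: orthogonal_self)
  moreover have "pairwise orthogonal (insert u V)"
    using V(3) uS unfolding S_def by (auto simp: pairwise_insert orthogonal_commute)
  ultimately show ?case using V nu by (intro exI[of _ "insert u V"]) auto
qed

lemma diagm_mult_right: "(X ** diagm l) $ i $ j = X $ i $ j * l j"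
  by (simp add: matrix_matrix_mult_def diagm_def if_distrib if_distribR sum.delta' cong: if_cong)

lemma diagm_mult_left: "(diagm l ** X) $ i $ j = l i * X $ i $ j"
  by (simp add: matrix_matrix_mult_def diagm_def if_distrib if_distribR sum.delta cong: if_cong)

lemma diagm_mult_vec: "(diagm l *v y) $ j = l j * y $ j"
  by (simp add: matrix_vector_mult_def diagm_def if_distrib if_distribR sum.delta cong: if_cong)

lemma eigenvector_columns_diag:
  fixes U M :: "real^'n^'n"
  assumes U: "orthogonal_matrix U" and ev: "\<And>j. M *v column j U = l j *\<^sub>R column j U"
  shows "M = U ** diagm l ** transpose U"
proof -
  have "(M ** U) $ i $ j = (U ** diagm l) $ i $ j" for i j
  proof -
    have "(M ** U) $ i $ j = (M *v column j U) $ i"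
      by (simp add: matrix_matrix_mult_def matrix_vector_mult_def column_def)
    then show ?thesis using ev by (simp add: column_def diagm_mult_right mult.commute)
  qed
  then have "M ** U = U ** diagm l" by (simp add: vec_eq_iff)
  moreover have "U ** transpose U = mat 1" using U unfolding orthogonal_matrix_def by auto
  then have "M = M ** U ** transpose U" by (simp flip: matrix_mul_assoc)
  ultimately show ?thesis by simp
qed

lemma commuting_symmetric_simultaneously_diagonalizable:
  fixes F :: "(real^'n^'n) set"
  assumes "finite F" "\<And>M. M \<in> F \<Longrightarrow> symmetric_matrix M"
    "\<And>M N. M \<in> F \<Longrightarrow> N \<in> F \<Longrightarrow> M ** N = N ** M"
  shows "\<exists>U. orthogonal_matrix U \<and> (\<forall>M\<in>F. \<exists>l. M = U ** diagm l ** transpose U)"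
proof -
  obtain V where V: "finite V" "card V = CARD('n)" "pairwise orthogonal V"
    "\<forall>v\<in>V. norm v = 1 \<and> common_eigenvector F v"
    using commuting_symmetric_orthonormal_eigenvectors[OF assms order_refl] by blast
  obtain g where g: "bij_betw g (UNIV::'n set) V"
    using finite_same_card_bij[of "UNIV::'n set" V] V(1,2) by auto
  define U where "U = (\<chi> i j. g j $ i)"
  have col: "column j U = g j" for j unfolding U_def column_def by simp
  have gV: "g j \<in> V" for j using g by (auto simp: bij_betw_def)
  have "orthogonal (g i) (g j)" if "i \<noteq> j" for i j
  proof -
    have "g i \<noteq> g j" using g that by (auto simp: bij_betw_def inj_on_def)
    then show ?thesis using V(3) gV unfolding pairwise_def by blast
  qed
  then have U: "orthogonal_matrix U"
    using V(4) gV by (simp add: orthogonal_matrix_orthonormal_columns col)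
  have "\<exists>l. M = U ** diagm l ** transpose U" if "M \<in> F" for M
  proof -
    have "\<forall>j. \<exists>c. M *v column j U = c *\<^sub>R column j U"
      using V(4) gV that unfolding col common_eigenvector_def by blast
    then obtain l where "\<And>j. M *v column j U = l j *\<^sub>R column j U" by metis
    then show ?thesis using eigenvector_columns_diag[OF U] by blast
  qed
  with U show ?thesis by blast
qed

section \<open>Functional calculus on a common eigenbasis\<close>

lemma diagm_intertwining_fun:
  fixes W :: "real^'n^'n"
  assumes "W ** diagm l = diagm e ** W"
  shows "W ** diagm (\<lambda>i. f (l i)) = diagm (\<lambda>i. f (e i)) ** W"
proof -
  have "W $ i $ j * f (l j) = f (e i) * W $ i $ j" for i j
  proof -
    have "W $ i $ j * l j = e i * W $ i $ j"
      using arg_cong[OF assms, of "\<lambda>X. X $ i $ j"] by (simp add: diagm_mult_right diagm_mult_left)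
    then show ?thesis by (cases "W $ i $ j = 0") auto
  qed
  then show ?thesis by (simp add: vec_eq_iff diagm_mult_right diagm_mult_left)
qed

text \<open>\<open>matfun\<close> picks some diagonalization; it is independent of the choice because
  \<open>W = V\<^sup>T U\<close> intertwines any two diagonal forms, and hence also their images under \<open>f\<close>.\<close>
lemma matfun_diag_conj:
  fixes U :: "real^'n^'n"
  assumes U: "orthogonal_matrix U"
  shows "matfun f (U ** diagm l ** transpose U) = U ** diagm (\<lambda>i. f (l i)) ** transpose U"
proof -
  let ?M = "U ** diagm l ** transpose U"
  let ?P = "\<lambda>X. \<exists>U l. orthogonal_matrix U \<and> ?M = U ** diagm l ** transpose U
    \<and> X = U ** diagm (\<lambda>i. f (l i)) ** transpose U"
  have "?P (U ** diagm (\<lambda>i. f (l i)) ** transpose U)" using U by blast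
  then have "?P (matfun f ?M)" unfolding matfun_def by (rule someI)
  then obtain V e where V: "orthogonal_matrix V" and Me: "?M = V ** diagm e ** transpose V"
    and fM: "matfun f ?M = V ** diagm (\<lambda>i. f (e i)) ** transpose V" by blast
  have UU: "X ** transpose U ** U = X" "X ** U ** transpose U = X"
    for X :: "real^'n^'n"
    using U unfolding orthogonal_matrix_def by (simp_all flip: matrix_mul_assoc)
  have VV: "transpose V ** V ** X = X" "V ** transpose V ** X = X"
    for X :: "real^'n^'n"
    using V unfolding orthogonal_matrix_def by (simp_all flip: matrix_mul_assoc)
  define W where "W = transpose V ** U"
  have "W ** diagm l = transpose V ** ?M ** U"
    unfolding W_def by (simp add: matrix_mul_assoc UU)
  also have "\<dots> = diagm e ** W"
    unfolding Me W_def by (simp add: matrix_mul_assoc VV)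
  finally have intertwined: "W ** diagm (\<lambda>i. f (l i)) = diagm (\<lambda>i. f (e i)) ** W"
    by (rule diagm_intertwining_fun)
  have "U ** diagm (\<lambda>i. f (l i)) ** transpose U = V ** (W ** diagm (\<lambda>i. f (l i))) ** transpose U"
    unfolding W_def by (simp add: matrix_mul_assoc VV)
  also have "\<dots> = V ** diagm (\<lambda>i. f (e i)) ** W ** transpose U"
    by (simp add: intertwined matrix_mul_assoc)
  also have "\<dots> = V ** diagm (\<lambda>i. f (e i)) ** transpose V"
    unfolding W_def by (simp add: matrix_mul_assoc UU)
  finally show ?thesis using fM by simp
qed

lemma diagm_mult_diagm: "diagm a ** diagm b = diagm (\<lambda>i. a i * b i)"
  by (simp add: vec_eq_iff diagm_mult_right) (simp add: diagm_def)

lemma matabs_diag_conj: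
  fixes U :: "real^'n^'n"
  assumes U: "orthogonal_matrix U"
  shows "matabs (U ** diagm l ** transpose U) = U ** diagm (\<lambda>i. \<bar>l i\<bar>) ** transpose U"
proof -
  have "transpose U ** U = mat 1" using U unfolding orthogonal_matrix_def by simp
  then have "(U ** diagm l ** transpose U) ** (U ** diagm l ** transpose U)
      = U ** (diagm l ** diagm l) ** transpose U"
    by (metis matrix_mul_assoc matrix_mul_rid)
  then have "(U ** diagm l ** transpose U) ** (U ** diagm l ** transpose U)
      = U ** diagm (\<lambda>i. l i * l i) ** transpose U"
    by (simp add: diagm_mult_diagm)
  then show ?thesis unfolding matabs_def by (simp add: matfun_diag_conj[OF U])
qed

lemma matrix_add_rdistrib: "(A + B) ** C = A ** C + B ** C"
  by (simp add: matrix_matrix_mult_def vec_eq_iff sum.distrib distrib_right)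

lemma diag_conj_add:
  "U ** diagm a ** transpose U + U ** diagm b ** transpose U = U ** diagm (\<lambda>i. a i + b i) ** transpose U"
proof -
  have "diagm a + diagm b = diagm (\<lambda>i. a i + b i)" by (simp add: vec_eq_iff diagm_def)
  then show ?thesis by (metis matrix_add_ldistrib matrix_add_rdistrib)
qed

lemma scaleR_mat_1_diag_conj:
  fixes U :: "real^'n^'n"
  assumes "orthogonal_matrix U"
  shows "c *\<^sub>R mat 1 = U ** diagm (\<lambda>_. c) ** transpose U"
proof -
  have "(diagm (\<lambda>_. c) :: real^'n^'n) = c *\<^sub>R mat 1" by (simp add: vec_eq_iff diagm_def mat_def)
  then have "U ** diagm (\<lambda>_. c) ** transpose U = c *\<^sub>R (U ** transpose U)"
    by (simp add: matrix_scalar_ac flip: scalar_matrix_assoc)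
  then show ?thesis using assms by (simp add: orthogonal_matrix_def)
qed

lemma quadratic_form_diag_conj:
  fixes U :: "real^'n^'m"
  shows "((U ** diagm l ** transpose U) *v x) \<bullet> x = (\<Sum>j\<in>UNIV. l j * ((transpose U *v x) $ j)\<^sup>2)"
proof -
  let ?y = "transpose U *v x"
  have "((U ** diagm l ** transpose U) *v x) \<bullet> x = (diagm l *v ?y) \<bullet> ?y"
    by (metis dot_lmul_matrix inner_commute matrix_vector_mul_assoc vector_transpose_matrix)
  also have "\<dots> = (\<Sum>j\<in>UNIV. l j * (?y $ j)\<^sup>2)"
    by (simp add: inner_vec_def diagm_mult_vec power2_eq_square mult.assoc)
  finally show ?thesis .
qed

lemma loewner_le_diag_conj:
  fixes U :: "real^'n^'m"
  assumes "\<And>j. p j \<le> q j"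
  shows "loewner_le (U ** diagm p ** transpose U) (U ** diagm q ** transpose U)"
  unfolding loewner_le_def
proof
  fix x :: "real^'m"
  show "((U ** diagm p ** transpose U) *v x) \<bullet> x \<le> ((U ** diagm q ** transpose U) *v x) \<bullet> x"
    unfolding quadratic_form_diag_conj by (intro sum_mono mult_right_mono assms) simp
qed

theorem theorem11:
  fixes f :: "real \<Rightarrow> real" and A B C :: "real^'n^'n"
  assumes "continuous_on {0..} f"
    and "three_convex_on {0..} f"
    and "mono_on {0..} f"
    and "concave_on {0..} f"
    and "symmetric_matrix A" and "symmetric_matrix B" and "symmetric_matrix C"
    and "A ** B = B ** A" and "B ** C = C ** B" and "C ** A = A ** C"
  shows "loewner_le
     (matfun f (matabs (A + B)) + matfun f (matabs (B + C)) + matfun f (matabs (C + A))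
        + f 0 *\<^sub>R mat 1)
     (matfun f (matabs A) + matfun f (matabs B) + matfun f (matabs C)
        + matfun f (matabs (A + B + C)))"
proof -
  have "\<exists>U. orthogonal_matrix U \<and> (\<forall>M\<in>{A, B, C}. \<exists>l. M = U ** diagm l ** transpose U)"
    using assms(5-10) by (intro commuting_symmetric_simultaneously_diagonalizable) auto
  then obtain U a b c where U: "orthogonal_matrix U" and A: "A = U ** diagm a ** transpose U"
    and B: "B = U ** diagm b ** transpose U" and C: "C = U ** diagm c ** transpose U"
    by blast
  have "loewner_le
      (U ** diagm (\<lambda>j. f \<bar>a j + b j\<bar> + f \<bar>b j + c j\<bar> + f \<bar>c j + a j\<bar> + f 0) ** transpose U)
      (U ** diagm (\<lambda>j. f \<bar>a j\<bar> + f \<bar>b j\<bar> + f \<bar>c j\<bar> + f \<bar>a j + b j + c j\<bar>) ** transpose U)"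
    using hlawka_ineq[OF assms(2-4)] by (rule loewner_le_diag_conj)
  then show ?thesis
    unfolding A B C diag_conj_add matabs_diag_conj[OF U] matfun_diag_conj[OF U]
      scaleR_mat_1_diag_conj[OF U] .
qed

end
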